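(* Let $X$ be a regular Hausdorff space and $\mathcal{P}$ a family of subsets of $X$. For $r\in\mathbb{N}$ and $P_1,\dots,P_r\in\mathcal{P}$ put $\langle P_1,\dots,P_r\rangle=\{K\in\mathcal{K}(X): K\subset \bigcup_{i=1}^r P_i,\ K\cap P_j\neq\emptyset\ (1\le j\le r)\}$ and $\mathcal{B}=\{\langle P_1,\dots,P_r\rangle: P_i\in\mathcal{P},\ r\in\mathbb{N}\}$. If $\mathcal{P}$ is compact-countable (resp. locally countable, locally finite, compact-finite) in $X$, then $\mathcal{B}$ is compact-countable (resp. locally countable, locally finite, compact-finite) in $\mathcal{K}(X)$. Moreover, if $\mathcal{P}$ consists of closed subsets of $X$, then $\mathcal{B}$ consists of closed subsets of $\mathcal{K}(X)$.
   Context: $\mathcal{K}(X)$ is the space of nonempty compact subsets of $X$ with the Vietoris topology, whose base consists of the sets $\langle U_1,\dots,U_k\rangle=\{K\in\mathcal{K}(X): K\subset\bigcup_{i=1}^k U_i,\ K\cap U_j\neq\emptyset \text{ for all } j\}$ with $U_i$ open in $X$. A family $\{X_\alpha\}$ of subsets of a space $Y$ is compact-countable (resp. compact-finite) if every compact $K\subset Y$ meets only countably (resp. finitely) many $X_\alpha$; locally countable (resp. locally finite) if every point has a neighborhood meeting only countably (resp. finitely) many $X_\alpha$. *)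

theory Defs
  imports "HOL-Analysis.Analysis"
begin

definition Kc :: "'a topology \<Rightarrow> 'a set set" where
  "Kc X = {K. K \<noteq> {} \<and> compactin X K}"

definition vbox :: "'a topology \<Rightarrow> 'a set list \<Rightarrow> 'a set set" where
  "vbox X Ps = {K \<in> Kc X. K \<subseteq> \<Union>(set Ps) \<and> (\<forall>P\<in>set Ps. K \<inter> P \<noteq> {})}"

definition vietoris :: "'a topology \<Rightarrow> 'a set topology" where
  "vietoris X = topology_generated_by
     {vbox X Us | Us. Us \<noteq> [] \<and> (\<forall>U\<in>set Us. openin X U)}"

definition box_family :: "'a topology \<Rightarrow> 'a set set \<Rightarrow> 'a set set set" where
  "box_family X \<P> = {vbox X Ps | Ps. Ps \<noteq> [] \<and> set Ps \<subseteq> \<P>}"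

definition compact_countable :: "'a topology \<Rightarrow> 'a set set \<Rightarrow> bool" where
  "compact_countable T F \<longleftrightarrow> (\<forall>K. compactin T K \<longrightarrow> countable {A \<in> F. A \<inter> K \<noteq> {}})"

definition compact_finite :: "'a topology \<Rightarrow> 'a set set \<Rightarrow> bool" where
  "compact_finite T F \<longleftrightarrow> (\<forall>K. compactin T K \<longrightarrow> finite {A \<in> F. A \<inter> K \<noteq> {}})"

definition locally_countable :: "'a topology \<Rightarrow> 'a set set \<Rightarrow> bool" where
  "locally_countable T F \<longleftrightarrow>
     (\<forall>x\<in>topspace T. \<exists>U. openin T U \<and> x \<in> U \<and> countable {A \<in> F. A \<inter> U \<noteq> {}})"

definition locally_finite_fam :: "'a topology \<Rightarrow> 'a set set \<Rightarrow> bool" where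
  "locally_finite_fam T F \<longleftrightarrow>
     (\<forall>x\<in>topspace T. \<exists>U. openin T U \<and> x \<in> U \<and> finite {A \<in> F. A \<inter> U \<noteq> {}})"

end

theory Submission
  imports Defs
begin

(*
  Two facts about the Vietoris topology carry the proof: the union of a compact family C of
  compacta is compact, and for every open W the compacta contained in W form a Vietoris-open
  set. Every side of a box meeting C meets the union of C, so the boxes meeting C are built
  from the members of the family meeting the compact set (union of C), or, in the local case,
  meeting a suitable open W around a single compactum; there are only countably (finitely)
  many such members, hence such boxes. If the sides P_i of a box are closed, its complement
  is the union of the open sets {K. K is not inside the union of the P_i} and {K. K misses P_i}.
*)

lemma vbox_subset_Kc: "vbox X Ps \<subseteq> Kc X"
  unfolding vbox_def by blast

lemma Kc_subset_topspace: "K \<in> Kc X \<Longrightarrow> K \<subseteq> topspace X"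
  by (simp add: Kc_def compactin_subset_topspace)

lemma openin_vietoris_vbox:
  "Us \<noteq> [] \<Longrightarrow> (\<And>U. U \<in> set Us \<Longrightarrow> openin X U) \<Longrightarrow> openin (vietoris X) (vbox X Us)"
  unfolding vietoris_def by (rule topology_generated_by_Basis) blast

lemma topspace_vietoris: "topspace (vietoris X) = Kc X"
proof -
  have "Kc X \<subseteq> vbox X [topspace X]"
    by (auto simp: vbox_def Kc_def dest: compactin_subset_topspace)
  moreover have "vbox X [topspace X] \<subseteq> topspace (vietoris X)"
    using openin_vietoris_vbox[of "[topspace X]" X] openin_subset by force
  moreover have "topspace (vietoris X) \<subseteq> Kc X"
    using vbox_subset_Kc by (auto simp: vietoris_def)
  ultimately show ?thesis by blast
qed

lemma openin_vietoris_upper: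
  assumes "openin X U"
  shows "openin (vietoris X) {K \<in> Kc X. K \<subseteq> U}"
proof -
  have "{K \<in> Kc X. K \<subseteq> U} = vbox X [U]"
    by (auto simp: vbox_def Kc_def)
  then show ?thesis
    using assms openin_vietoris_vbox[of "[U]"] by simp
qed

lemma openin_vietoris_lower:
  assumes "openin X U"
  shows "openin (vietoris X) {K \<in> Kc X. K \<inter> U \<noteq> {}}"
proof -
  have "{K \<in> Kc X. K \<inter> U \<noteq> {}} = vbox X [topspace X, U]"
    by (auto simp: vbox_def Kc_def dest: compactin_subset_topspace)
  then show ?thesis
    using assms openin_vietoris_vbox[of "[topspace X, U]" X] by auto
qed

lemma closedin_vietoris_vbox:
  assumes "\<And>P. P \<in> set Ps \<Longrightarrow> closedin X P"
  shows "closedin (vietoris X) (vbox X Ps)"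
proof -
  have "Kc X - vbox X Ps =
      {K \<in> Kc X. K \<inter> (topspace X - \<Union>(set Ps)) \<noteq> {}}
      \<union> (\<Union>P\<in>set Ps. {K \<in> Kc X. K \<subseteq> topspace X - P})"
    using Kc_subset_topspace[of _ X] by (auto simp: vbox_def) blast+
  moreover have "openin (vietoris X) {K \<in> Kc X. K \<inter> (topspace X - \<Union>(set Ps)) \<noteq> {}}"
    using assms by (intro openin_vietoris_lower openin_diff closedin_Union) auto
  moreover have "openin (vietoris X) (\<Union>P\<in>set Ps. {K \<in> Kc X. K \<subseteq> topspace X - P})"
    using assms by (intro openin_Union) (auto intro!: openin_vietoris_upper)
  ultimately have "openin (vietoris X) (Kc X - vbox X Ps)"
    by (simp add: openin_Un)
  then show ?thesis
    by (simp add: closedin_def topspace_vietoris vbox_subset_Kc)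
qed

lemma closedin_box_family:
  assumes "\<forall>P\<in>\<P>. closedin X P"
  shows "\<forall>B\<in>box_family X \<P>. closedin (vietoris X) B"
  using assms unfolding box_family_def by (auto intro!: closedin_vietoris_vbox)

lemma compactin_Union_vietoris:
  assumes C: "compactin (vietoris X) C"
  shows "compactin X (\<Union>C)"
  unfolding compactin_def
proof (intro conjI allI impI)
  have CK: "C \<subseteq> Kc X"
    using compactin_subset_topspace[OF C] by (simp add: topspace_vietoris)
  then show "\<Union>C \<subseteq> topspace X"
    using Kc_subset_topspace by blast
  fix \<U> assume \<U>: "(\<forall>U\<in>\<U>. openin X U) \<and> \<Union>C \<subseteq> \<Union>\<U>"
  define upper where "upper \<F> = {K \<in> Kc X. K \<subseteq> \<Union>\<F>}" for \<F>
  define \<V> where "\<V> = upper ` {\<F>. finite \<F> \<and> \<F> \<subseteq> \<U>}"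
  have "openin (vietoris X) (upper \<F>)" if "\<F> \<subseteq> \<U>" for \<F>
    unfolding upper_def using that \<U> by (intro openin_vietoris_upper openin_Union) auto
  then have "\<forall>V\<in>\<V>. openin (vietoris X) V"
    unfolding \<V>_def by blast
  moreover have "C \<subseteq> \<Union>\<V>"
  proof
    fix K assume "K \<in> C"
    then have "compactin X K" "K \<subseteq> \<Union>\<U>"
      using CK \<U> by (auto simp: Kc_def)
    then obtain \<F> where "finite \<F>" "\<F> \<subseteq> \<U>" "K \<subseteq> \<Union>\<F>"
      using \<U> unfolding compactin_def by meson
    with \<open>K \<in> C\<close> CK show "K \<in> \<Union>\<V>"
      unfolding \<V>_def upper_def by blast
  qed
  ultimately obtain \<G> where "finite \<G>" "\<G> \<subseteq> \<V>" "C \<subseteq> \<Union>\<G>"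
    using C unfolding compactin_def by meson
  obtain \<FF> where \<FF>: "finite \<FF>" "\<FF> \<subseteq> {\<F>. finite \<F> \<and> \<F> \<subseteq> \<U>}" "\<G> = upper ` \<FF>"
    using \<open>finite \<G>\<close> \<open>\<G> \<subseteq> \<V>\<close> unfolding \<V>_def by (meson finite_subset_image)
  show "\<exists>\<F>. finite \<F> \<and> \<F> \<subseteq> \<U> \<and> \<Union>C \<subseteq> \<Union>\<F>"
  proof (intro exI conjI)
    show "finite (\<Union>\<FF>)" "\<Union>\<FF> \<subseteq> \<U>"
      using \<FF> by auto
    show "\<Union>C \<subseteq> \<Union>(\<Union>\<FF>)"
      using \<open>C \<subseteq> \<Union>\<G>\<close> \<FF>(3) unfolding upper_def by blast
  qed
qed

lemma box_family_meeting_subset: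
  assumes "\<Union>C \<subseteq> L"
  shows "{B \<in> box_family X \<P>. B \<inter> C \<noteq> {}} \<subseteq> box_family X {A \<in> \<P>. A \<inter> L \<noteq> {}}"
proof
  fix B assume "B \<in> {B \<in> box_family X \<P>. B \<inter> C \<noteq> {}}"
  then obtain Ps K where Ps: "B = vbox X Ps" "Ps \<noteq> []" "set Ps \<subseteq> \<P>" and K: "K \<in> B" "K \<in> C"
    unfolding box_family_def by blast
  have "\<forall>P\<in>set Ps. P \<inter> L \<noteq> {}"
    using K Ps(1) assms unfolding vbox_def by blast
  with Ps show "B \<in> box_family X {A \<in> \<P>. A \<inter> L \<noteq> {}}"
    unfolding box_family_def by blast
qed

lemma countable_box_family:
  assumes "countable \<P>"
  shows "countable (box_family X \<P>)"
proof -
  have "box_family X \<P> \<subseteq> vbox X ` lists \<P>"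
    unfolding box_family_def by auto
  then show ?thesis
    by (rule countable_subset) (simp add: assms)
qed

lemma finite_box_family:
  assumes "finite \<P>"
  shows "finite (box_family X \<P>)"
proof -
  have "box_family X \<P> \<subseteq> (\<lambda>\<Q>. {K \<in> Kc X. K \<subseteq> \<Union>\<Q> \<and> (\<forall>P\<in>\<Q>. K \<inter> P \<noteq> {})}) ` Pow \<P>"
    unfolding box_family_def vbox_def by blast
  then show ?thesis
    by (rule finite_subset) (simp add: assms)
qed

lemma compact_countable_box_family:
  assumes "compact_countable X \<P>"
  shows "compact_countable (vietoris X) (box_family X \<P>)"
  unfolding compact_countable_def
proof (intro allI impI)
  fix C assume "compactin (vietoris X) C"
  then have "countable {A \<in> \<P>. A \<inter> \<Union>C \<noteq> {}}"
    using assms compactin_Union_vietoris unfolding compact_countable_def by blast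
  then show "countable {B \<in> box_family X \<P>. B \<inter> C \<noteq> {}}"
    by (rule countable_subset[OF box_family_meeting_subset countable_box_family, OF order_refl])
qed

lemma compact_finite_box_family:
  assumes "compact_finite X \<P>"
  shows "compact_finite (vietoris X) (box_family X \<P>)"
  unfolding compact_finite_def
proof (intro allI impI)
  fix C assume "compactin (vietoris X) C"
  then have "finite {A \<in> \<P>. A \<inter> \<Union>C \<noteq> {}}"
    using assms compactin_Union_vietoris unfolding compact_finite_def by blast
  then show "finite {B \<in> box_family X \<P>. B \<inter> C \<noteq> {}}"
    by (rule finite_subset[OF box_family_meeting_subset finite_box_family, OF order_refl])
qed

lemma compactin_finite_cover_locally:
  assumes "compactin X K" and "\<forall>x\<in>topspace X. \<exists>U. openin X U \<and> x \<in> U \<and> R U"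
  obtains \<F> where "finite \<F>" "\<forall>U\<in>\<F>. openin X U \<and> R U" "K \<subseteq> \<Union>\<F>"
proof -
  have "K \<subseteq> \<Union>{U. openin X U \<and> R U}"
    using assms compactin_subset_topspace by blast
  then show ?thesis
    using compactinD[OF assms(1), of "{U. openin X U \<and> R U}"] that by blast
qed

lemma locally_countable_compactin_nbhd:
  assumes "locally_countable X \<P>" and "compactin X K"
  obtains W where "openin X W" "K \<subseteq> W" "countable {A \<in> \<P>. A \<inter> W \<noteq> {}}"
proof -
  obtain \<F> where \<F>: "finite \<F>" "\<forall>U\<in>\<F>. openin X U \<and> countable {A \<in> \<P>. A \<inter> U \<noteq> {}}" "K \<subseteq> \<Union>\<F>"
    using assms(2,1) unfolding locally_countable_def by (rule compactin_finite_cover_locally)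
  have "{A \<in> \<P>. A \<inter> \<Union>\<F> \<noteq> {}} = (\<Union>U\<in>\<F>. {A \<in> \<P>. A \<inter> U \<noteq> {}})"
    by blast
  then have "countable {A \<in> \<P>. A \<inter> \<Union>\<F> \<noteq> {}}"
    using \<F> by (simp add: countable_finite)
  with \<F> show ?thesis
    by (intro that[of "\<Union>\<F>"]) auto
qed

lemma locally_finite_compactin_nbhd:
  assumes "locally_finite_fam X \<P>" and "compactin X K"
  obtains W where "openin X W" "K \<subseteq> W" "finite {A \<in> \<P>. A \<inter> W \<noteq> {}}"
proof -
  obtain \<F> where \<F>: "finite \<F>" "\<forall>U\<in>\<F>. openin X U \<and> finite {A \<in> \<P>. A \<inter> U \<noteq> {}}" "K \<subseteq> \<Union>\<F>"
    using assms(2,1) unfolding locally_finite_fam_def by (rule compactin_finite_cover_locally)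
  have "{A \<in> \<P>. A \<inter> \<Union>\<F> \<noteq> {}} = (\<Union>U\<in>\<F>. {A \<in> \<P>. A \<inter> U \<noteq> {}})"
    by blast
  then have "finite {A \<in> \<P>. A \<inter> \<Union>\<F> \<noteq> {}}"
    using \<F> by simp
  with \<F> show ?thesis
    by (intro that[of "\<Union>\<F>"]) auto
qed

lemma locally_countable_box_family:
  assumes "locally_countable X \<P>"
  shows "locally_countable (vietoris X) (box_family X \<P>)"
  unfolding locally_countable_def topspace_vietoris
proof
  fix K assume "K \<in> Kc X"
  then have "compactin X K"
    by (simp add: Kc_def)
  then obtain W where W: "openin X W" "K \<subseteq> W" "countable {A \<in> \<P>. A \<inter> W \<noteq> {}}"
    by (rule locally_countable_compactin_nbhd[OF assms])
  let ?V = "{L \<in> Kc X. L \<subseteq> W}"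
  have "{B \<in> box_family X \<P>. B \<inter> ?V \<noteq> {}} \<subseteq> box_family X {A \<in> \<P>. A \<inter> W \<noteq> {}}"
    by (rule box_family_meeting_subset) blast
  then have "countable {B \<in> box_family X \<P>. B \<inter> ?V \<noteq> {}}"
    using countable_box_family[OF W(3)] by (rule countable_subset)
  with W(1,2) \<open>K \<in> Kc X\<close>
  show "\<exists>V. openin (vietoris X) V \<and> K \<in> V \<and> countable {B \<in> box_family X \<P>. B \<inter> V \<noteq> {}}"
    by (blast intro: openin_vietoris_upper)
qed

lemma locally_finite_box_family:
  assumes "locally_finite_fam X \<P>"
  shows "locally_finite_fam (vietoris X) (box_family X \<P>)"
  unfolding locally_finite_fam_def topspace_vietoris
proof
  fix K assume "K \<in> Kc X"
  then have "compactin X K"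
    by (simp add: Kc_def)
  then obtain W where W: "openin X W" "K \<subseteq> W" "finite {A \<in> \<P>. A \<inter> W \<noteq> {}}"
    by (rule locally_finite_compactin_nbhd[OF assms])
  let ?V = "{L \<in> Kc X. L \<subseteq> W}"
  have "{B \<in> box_family X \<P>. B \<inter> ?V \<noteq> {}} \<subseteq> box_family X {A \<in> \<P>. A \<inter> W \<noteq> {}}"
    by (rule box_family_meeting_subset) blast
  then have "finite {B \<in> box_family X \<P>. B \<inter> ?V \<noteq> {}}"
    using finite_box_family[OF W(3)] by (rule finite_subset)
  with W(1,2) \<open>K \<in> Kc X\<close>
  show "\<exists>V. openin (vietoris X) V \<and> K \<in> V \<and> finite {B \<in> box_family X \<P>. B \<inter> V \<noteq> {}}"
    by (blast intro: openin_vietoris_upper)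
qed

theorem proposition3p4:
  fixes X :: "'a topology" and \<P> :: "'a set set"
  assumes "regular_space X" and "Hausdorff_space X"
    and "\<forall>P\<in>\<P>. P \<subseteq> topspace X"
  shows "(compact_countable X \<P> \<longrightarrow> compact_countable (vietoris X) (box_family X \<P>))
    \<and> (locally_countable X \<P> \<longrightarrow> locally_countable (vietoris X) (box_family X \<P>))
    \<and> (locally_finite_fam X \<P> \<longrightarrow> locally_finite_fam (vietoris X) (box_family X \<P>))
    \<and> (compact_finite X \<P> \<longrightarrow> compact_finite (vietoris X) (box_family X \<P>))
    \<and> ((\<forall>P\<in>\<P>. closedin X P) \<longrightarrow> (\<forall>B\<in>box_family X \<P>. closedin (vietoris X) B))"
  using compact_countable_box_family locally_countable_box_family locally_finite_box_family
    compact_finite_box_family closedin_box_family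
  by blast

end
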